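(* Let $(\mathfrak{g},[\cdot,\ldots,\cdot],\varepsilon,\alpha)$ be an $n$-Hom-Lie color algebra and $\mathcal{N}$ a Nijenhuis operator on it. For $\lambda\in\mathbb{K}$ define $$[x_1,\ldots,x_n]_\lambda=[x_1,\ldots,x_n]+\sum_{i=1}^{n-1}\lambda^i[x_1,\ldots,x_n]^i_{\mathcal{N}}.$$ Then this bracket defines a deformation of $\mathfrak{g}$ (i.e. $(\mathfrak{g},[\cdot,\ldots,\cdot]_\lambda,\varepsilon,\alpha)$ is an $n$-Hom-Lie color algebra) which is infinitesimally trivial: $\mathcal{T}_\lambda=\mathrm{id}+\lambda\mathcal{N}$ satisfies $\mathcal{T}_\lambda\circ\alpha=\alpha\circ\mathcal{T}_\lambda$ and $\mathcal{T}_\lambda([x_1,\ldots,x_n]_\lambda)=[\mathcal{T}_\lambda(x_1),\ldots,\mathcal{T}_\lambda(x_n)]$ for all $x_1,\ldots,x_n\in\mathfrak{g}$.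
   Context: $\mathbb{K}$ is a field of characteristic zero and $\Gamma$ an abelian group. A bicharacter is a map $\varepsilon:\Gamma\times\Gamma\to\mathbb{K}\setminus\{0\}$ with $\varepsilon(a,b)\varepsilon(b,a)=1$, $\varepsilon(a,b+c)=\varepsilon(a,b)\varepsilon(a,c)$, $\varepsilon(a+b,c)=\varepsilon(a,c)\varepsilon(b,c)$. For homogeneous $x,y$, $\varepsilon(x,y)=\varepsilon(|x|,|y|)$ and $\varepsilon(x,y_1+\dots+y_k)=\varepsilon(|x|,|y_1|+\dots+|y_k|)$ ($=1$ for an empty sum). An $n$-Hom-Lie color algebra $(\mathfrak{g},[\cdot,\ldots,\cdot],\varepsilon,\alpha)$ is a $\Gamma$-graded vector space with an $n$-linear bracket of degree zero, a bicharacter $\varepsilon$ and a degree-zero linear map $\alpha$ such that for homogeneous elements: (i) $[x_1,\ldots,x_i,x_{i+1},\ldots,x_n]=-\varepsilon(x_i,x_{i+1})[x_1,\ldots,x_{i+1},x_i,\ldots,x_n]$; (ii) $[\alpha(x_1),\ldots,\alpha(x_{n-1}),[y_1,\ldots,y_n]]=\sum_{i=1}^n\varepsilon(x_1+\dots+x_{n-1},y_1+\dots+y_{i-1})[\alpha(y_1),\ldots,\alpha(y_{i-1}),[x_1,\ldots,x_{n-1},y_i],\alpha(y_{i+1}),\ldots,\alpha(y_n)]$. For a degree-zero linear map $\mathcal{N}:\mathfrak{g}\to\mathfrak{g}$ define $[\cdot,\ldots,\cdot]^0_{\mathcal{N}}=[\cdot,\ldots,\cdot]$ and for $1\le j\le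 n-1$: $[x_1,\ldots,x_n]^j_{\mathcal{N}}=\sum_{i_1<\dots<i_j}[x_1,\ldots,\mathcal{N}x_{i_1},\ldots,\mathcal{N}x_{i_j},\ldots,x_n]-\mathcal{N}([x_1,\ldots,x_n]^{j-1}_{\mathcal{N}})$, where the sum applies $\mathcal{N}$ exactly to the entries in positions $i_1,\ldots,i_j$. $\mathcal{N}$ is a Nijenhuis operator if $\mathcal{N}\circ\alpha=\alpha\circ\mathcal{N}$ and $[\mathcal{N}x_1,\ldots,\mathcal{N}x_n]=\mathcal{N}([x_1,\ldots,x_n]^{n-1}_{\mathcal{N}})$ for all $x_i$. *)

theory Defs
  imports Main
begin

text \<open>The underlying K-vector space is a type 'v with a scalar multiplication
  scale :: 'k \<Rightarrow> 'v \<Rightarrow> 'v satisfying vector_space scale, 'k a field of char 0.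
  The Gamma-grading is a family G :: 'g \<Rightarrow> 'v set of subspaces whose (internal) sum is direct
  and equals the whole space. n-ary brackets are functions on lists of length n.\<close>

definition k_linear :: "('k::field \<Rightarrow> 'v::ab_group_add \<Rightarrow> 'v) \<Rightarrow> ('v \<Rightarrow> 'v) \<Rightarrow> bool" where
  "k_linear scale f \<longleftrightarrow>
     (\<forall>x y. f (x + y) = f x + f y) \<and> (\<forall>c x. f (scale c x) = scale c (f x))"

definition is_subspace :: "('k::field \<Rightarrow> 'v::ab_group_add \<Rightarrow> 'v) \<Rightarrow> 'v set \<Rightarrow> bool" where
  "is_subspace scale S \<longleftrightarrow>
     0 \<in> S \<and> (\<forall>x\<in>S. \<forall>y\<in>S. x + y \<in> S) \<and> (\<forall>c. \<forall>x\<in>S. scale c x \<in> S)"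

definition is_vector_space :: "('k::field \<Rightarrow> 'v::ab_group_add \<Rightarrow> 'v) \<Rightarrow> bool" where
  "is_vector_space scale \<longleftrightarrow>
     (\<forall>a x y. scale a (x + y) = scale a x + scale a y) \<and>
     (\<forall>a b x. scale (a + b) x = scale a x + scale b x) \<and>
     (\<forall>a b x. scale a (scale b x) = scale (a * b) x) \<and>
     (\<forall>x. scale 1 x = x)"

definition graded_space ::
  "('k::field \<Rightarrow> 'v::ab_group_add \<Rightarrow> 'v) \<Rightarrow> ('g::ab_group_add \<Rightarrow> 'v set) \<Rightarrow> bool" where
  "graded_space scale G \<longleftrightarrow>
     is_vector_space scale \<and>
     (\<forall>a. is_subspace scale (G a)) \<and>
     (\<forall>v. \<exists>S f. finite S \<and> (\<forall>a\<in>S. f a \<in> G a) \<and> v = (\<Sum>a\<in>S. f a)) \<and>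
     (\<forall>S f. finite S \<and> (\<forall>a\<in>S. f a \<in> G a) \<and> (\<Sum>a\<in>S. f a) = 0 \<longrightarrow> (\<forall>a\<in>S. f a = 0))"

definition degree_zero_map ::
  "('g \<Rightarrow> 'v set) \<Rightarrow> ('v \<Rightarrow> 'v) \<Rightarrow> bool" where
  "degree_zero_map G f \<longleftrightarrow> (\<forall>a. \<forall>x\<in>G a. f x \<in> G a)"

definition bicharacter :: "('g::ab_group_add \<Rightarrow> 'g \<Rightarrow> 'k::field) \<Rightarrow> bool" where
  "bicharacter eps \<longleftrightarrow>
     (\<forall>a b. eps a b \<noteq> 0) \<and>
     (\<forall>a b. eps a b * eps b a = 1) \<and>
     (\<forall>a b c. eps a (b + c) = eps a b * eps a c) \<and>
     (\<forall>a b c. eps (a + b) c = eps a c * eps b c)"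

definition n_multilinear ::
  "('k::field \<Rightarrow> 'v::ab_group_add \<Rightarrow> 'v) \<Rightarrow> nat \<Rightarrow> ('v list \<Rightarrow> 'v) \<Rightarrow> bool" where
  "n_multilinear scale n br \<longleftrightarrow>
     (\<forall>xs i c u w. length xs = n \<and> i < n \<longrightarrow>
        br (xs[i := scale c u + w]) = scale c (br (xs[i := u])) + br (xs[i := w]))"

definition bracket_degree_zero ::
  "('g::ab_group_add \<Rightarrow> 'v set) \<Rightarrow> nat \<Rightarrow> ('v list \<Rightarrow> 'v) \<Rightarrow> bool" where
  "bracket_degree_zero G n br \<longleftrightarrow>
     (\<forall>xs as. length xs = n \<and> length as = n \<and> (\<forall>i<n. xs ! i \<in> G (as ! i))
        \<longrightarrow> br xs \<in> G (sum_list as))"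

definition homog :: "('g \<Rightarrow> 'v set) \<Rightarrow> 'v list \<Rightarrow> 'g list \<Rightarrow> bool" where
  "homog G xs as \<longleftrightarrow> length xs = length as \<and> (\<forall>i<length xs. xs ! i \<in> G (as ! i))"

text \<open>n-Hom-Lie color algebra (indices 0-based: positions i, i+1 for i+1 < n in (i);
  in (ii) the summand index i ranges over 0..n-1, corresponding to i+1 in the paper).\<close>
definition n_hom_lie_color ::
  "('k::field \<Rightarrow> 'v::ab_group_add \<Rightarrow> 'v) \<Rightarrow> ('g::ab_group_add \<Rightarrow> 'v set) \<Rightarrow> nat \<Rightarrow>
   ('v list \<Rightarrow> 'v) \<Rightarrow> ('g \<Rightarrow> 'g \<Rightarrow> 'k) \<Rightarrow> ('v \<Rightarrow> 'v) \<Rightarrow> bool" where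
  "n_hom_lie_color scale G n br eps alpha \<longleftrightarrow>
     graded_space scale G \<and>
     n_multilinear scale n br \<and> bracket_degree_zero G n br \<and>
     bicharacter eps \<and>
     k_linear scale alpha \<and> degree_zero_map G alpha \<and>
     (\<forall>xs as i. length xs = n \<and> homog G xs as \<and> Suc i < n \<longrightarrow>
        br xs = - scale (eps (as ! i) (as ! Suc i))
                   (br (xs[i := xs ! Suc i, Suc i := xs ! i]))) \<and>
     (\<forall>xs as ys bs. length xs = n - 1 \<and> homog G xs as \<and> length ys = n \<and> homog G ys bs \<longrightarrow>
        br (map alpha xs @ [br ys]) =
          (\<Sum>i<n. scale (eps (sum_list as) (sum_list (take i bs)))
             (br (map alpha (take i ys) @ [br (xs @ [ys ! i])] @ map alpha (drop (Suc i) ys)))))"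

definition applyN :: "('v \<Rightarrow> 'v) \<Rightarrow> nat set \<Rightarrow> 'v list \<Rightarrow> 'v list" where
  "applyN N S xs = map (\<lambda>k. if k \<in> S then N (xs ! k) else xs ! k) [0..<length xs]"

fun nbr :: "('v list \<Rightarrow> 'v::ab_group_add) \<Rightarrow> ('v \<Rightarrow> 'v) \<Rightarrow> nat \<Rightarrow> 'v list \<Rightarrow> 'v" where
  "nbr br N 0 xs = br xs"
| "nbr br N (Suc j) xs =
     (\<Sum>S\<in>{S. S \<subseteq> {..<length xs} \<and> card S = Suc j}. br (applyN N S xs)) - N (nbr br N j xs)"

definition nijenhuis ::
  "nat \<Rightarrow> ('v list \<Rightarrow> 'v::ab_group_add) \<Rightarrow> ('v \<Rightarrow> 'v) \<Rightarrow> ('v \<Rightarrow> 'v) \<Rightarrow> bool" where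
  "nijenhuis n br alpha N \<longleftrightarrow>
     N \<circ> alpha = alpha \<circ> N \<and>
     (\<forall>xs. length xs = n \<longrightarrow> br (map N xs) = N (nbr br N (n - 1) xs))"

definition lambda_bracket ::
  "('k::field \<Rightarrow> 'v::ab_group_add \<Rightarrow> 'v) \<Rightarrow> nat \<Rightarrow> ('v list \<Rightarrow> 'v) \<Rightarrow> ('v \<Rightarrow> 'v) \<Rightarrow> 'k \<Rightarrow> 'v list \<Rightarrow> 'v" where
  "lambda_bracket scale n br N lam xs = br xs + (\<Sum>i\<in>{1..n-1}. scale (lam ^ i) (nbr br N i xs))"

end

theory Submission
  imports Defs "HOL.Vector_Spaces" "HOL-Combinatorics.Transposition"
begin

(* Write T l = id + l N. Expanding [T l x_1, ..., T l x_n] by multilinearity gives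
   the sum over j of l^j s_j, where s_j is the sum of the brackets with N applied to exactly j
   entries. The recursion defining the brackets [...]^j_N says s_j = [...]^j_N + N [...]^(j-1)_N
   for 0 < j < n, and the Nijenhuis condition says s_n = N [...]^(n-1)_N, so the sum telescopes
   to T l [x_1, ..., x_n]_l.
   For the Hom-Jacobi identity apply T l to both sides: T l intertwines the two brackets and
   commutes with alpha, so the images agree by the Hom-Jacobi identity of the original bracket.
   T l need not be invertible, but both sides are polynomials in l, and a polynomial f with
   f l + l N (f l) = 0 for all l vanishes by comparing coefficients, which needs
   characteristic zero. *)

lemma vector_space_if_is_vector_space: "is_vector_space scale \<Longrightarrow> vector_space scale"
  by (simp add: is_vector_space_def vector_space_def)

context vector_space
begin

lemma k_linear_iff_linear: "k_linear scale f \<longleftrightarrow> Vector_Spaces.linear scale scale f"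
  by (simp add: k_linear_def linear_iff vector_space_axioms)

lemma is_subspace_iff_subspace: "is_subspace scale S \<longleftrightarrow> subspace S"
  by (simp add: is_subspace_def subspace_def)

definition polynomial_fun :: "('a \<Rightarrow> 'b) \<Rightarrow> bool" where
  "polynomial_fun f \<longleftrightarrow> (\<exists>m c. \<forall>l. f l = (\<Sum>k<m. l ^ k *s c k))"

lemma polynomial_funI: "(\<And>l. f l = (\<Sum>k<m. l ^ k *s c k)) \<Longrightarrow> polynomial_fun f"
  unfolding polynomial_fun_def by blast

lemma sum_power_scale_pad:
  assumes "m \<le> m'"
  shows "(\<Sum>k<m'. l ^ k *s (if k < m then c k else 0)) = (\<Sum>k<m. l ^ k *s c k)"
proof -
  have "{..<m'} \<inter> {k. k < m} = {..<m}"
    using assms by auto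
  then show ?thesis
    by (simp add: if_distrib sum.If_cases cong: if_cong)
qed

lemma scale_sum_power_scale:
  "l *s (\<Sum>k<m. l ^ k *s c k) = (\<Sum>k<Suc m. l ^ k *s (if k = 0 then 0 else c (k - 1)))"
  by (simp only: sum.lessThan_Suc_shift) (simp add: scale_sum_right)

lemma polynomial_fun_const: "polynomial_fun (\<lambda>l. v)"
  unfolding polynomial_fun_def by (intro exI[of _ 1] exI[of _ "\<lambda>_. v"]) simp

lemma polynomial_fun_add:
  assumes "polynomial_fun f" "polynomial_fun g"
  shows "polynomial_fun (\<lambda>l. f l + g l)"
proof -
  obtain m c m' c' where f: "\<And>l. f l = (\<Sum>k<m. l ^ k *s c k)"
    and g: "\<And>l. g l = (\<Sum>k<m'. l ^ k *s c' k)"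
    using assms unfolding polynomial_fun_def by blast
  have "f l + g l
      = (\<Sum>k<m + m'. l ^ k *s ((if k < m then c k else 0) + (if k < m' then c' k else 0)))" for l
    by (simp only: scale_right_distrib sum.distrib sum_power_scale_pad f g le_add1 le_add2)
  then show ?thesis
    by (rule polynomial_funI)
qed

lemma polynomial_fun_sum:
  "(\<And>i. i \<in> A \<Longrightarrow> polynomial_fun (f i)) \<Longrightarrow> polynomial_fun (\<lambda>l. \<Sum>i\<in>A. f i l)"
  by (induction A rule: infinite_finite_induct)
    (auto simp: polynomial_fun_const polynomial_fun_add)

lemma polynomial_fun_linear:
  assumes F: "Vector_Spaces.linear scale scale F" and "polynomial_fun f"
  shows "polynomial_fun (\<lambda>l. F (f l))"
proof -
  obtain m c where f: "\<And>l. f l = (\<Sum>k<m. l ^ k *s c k)"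
    using assms(2) unfolding polynomial_fun_def by blast
  interpret F: linear scale scale F by (rule F)
  have "F (f l) = (\<Sum>k<m. l ^ k *s F (c k))" for l
    by (simp add: f F.sum F.scale)
  then show ?thesis
    by (rule polynomial_funI)
qed

lemma polynomial_fun_diff:
  assumes "polynomial_fun f" "polynomial_fun g"
  shows "polynomial_fun (\<lambda>l. f l - g l)"
  using polynomial_fun_add[OF assms(1) polynomial_fun_linear[OF linear_uminus assms(2)]]
  by simp

lemma polynomial_fun_power_scale:
  assumes "polynomial_fun f"
  shows "polynomial_fun (\<lambda>l. l ^ j *s f l)"
proof (induction j)
  case 0
  then show ?case
    using assms by simp
next
  case (Suc j)
  then obtain m c where IH: "\<And>l. l ^ j *s f l = (\<Sum>k<m. l ^ k *s c k)"
    unfolding polynomial_fun_def by blast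
  have "l ^ Suc j *s f l = l *s (l ^ j *s f l)" for l
    by simp
  also have "\<dots> l = (\<Sum>k<Suc m. l ^ k *s (if k = 0 then 0 else c (k - 1)))" for l
    by (simp only: IH scale_sum_power_scale)
  finally show ?case
    by (rule polynomial_funI)
qed

end

locale vector_space_char_0 = vector_space scale
  for scale :: "'a::field_char_0 \<Rightarrow> 'b::ab_group_add \<Rightarrow> 'b" (infixr \<open>*s\<close> 75)
begin

text \<open>Comparing the polynomial at \<open>2 * l\<close> and at \<open>l\<close> kills the top coefficient and multiplies
  the \<open>k\<close>-th one by \<open>2 ^ k - 2 ^ m \<noteq> 0\<close>; this is where characteristic zero is used.\<close>
lemma sum_power_scale_eq_0_imp_coeff_eq_0:
  assumes "\<And>l. (\<Sum>k<m. l ^ k *s c k) = 0" and "k < m"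
  shows "c k = 0"
  using assms
proof (induction m arbitrary: c k)
  case 0
  then show ?case by simp
next
  case (Suc m)
  have scaled: "(\<Sum>k<m. l ^ k *s ((2 ^ k - 2 ^ m) *s c k)) = 0" for l :: 'a
  proof -
    have "(\<Sum>k<m. l ^ k *s ((2 ^ k - 2 ^ m) *s c k))
        = (\<Sum>k<Suc m. (2 * l) ^ k *s c k) - 2 ^ m *s (\<Sum>k<Suc m. l ^ k *s c k)"
      by (simp add: scale_sum_right power_mult_distrib algebra_simps sum_subtractf)
    then show ?thesis
      using Suc.prems(1)[of l] Suc.prems(1)[of "2 * l"] by (simp add: power_mult_distrib)
  qed
  have "(2 ^ k - 2 ^ m) *s c k = 0" if "k < m" for k
    using Suc.IH[OF scaled that] .
  moreover have "(2 :: 'a) ^ k \<noteq> 2 ^ m" if "k < m" for k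
  proof
    assume "(2 :: 'a) ^ k = 2 ^ m"
    then have "(2 :: nat) ^ k = 2 ^ m"
      by (metis of_nat_eq_iff of_nat_numeral of_nat_power)
    with that show False
      by simp
  qed
  ultimately have lower: "c k = 0" if "k < m" for k
    using that by simp
  then have "c m = 0"
    using Suc.prems(1)[of 1] by simp
  then show ?case
    using lower Suc.prems(2) less_Suc_eq by blast
qed

lemma polynomial_fun_eq_0_if_deformation_eq_0:
  assumes N: "Vector_Spaces.linear scale scale N" and "polynomial_fun f"
    and deformation: "\<And>l. f l + l *s N (f l) = 0"
  shows "f l = 0"
proof -
  obtain m c where f: "\<And>l. f l = (\<Sum>k<m. l ^ k *s c k)"
    using assms(2) unfolding polynomial_fun_def by blast
  interpret N: linear scale scale N by (rule N)
  define d where "d k = (if k < m then c k else 0) + (if k = 0 then 0 else N (c (k - 1)))" for k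
  have "(\<Sum>k<Suc m. l ^ k *s d k) = f l + l *s N (f l)" for l
    unfolding d_def scale_right_distrib sum.distrib
    by (simp only: sum_power_scale_pad[OF le_SucI[OF order_refl]] f scale_sum_power_scale
        N.sum N.scale)
  then have d: "d k = 0" if "k < Suc m" for k
    using sum_power_scale_eq_0_imp_coeff_eq_0 deformation that by metis
  have "c k = 0" if "k < m" for k
    using that
  proof (induction k)
    case 0
    then show ?case using d[of 0] by (simp add: d_def)
  next
    case (Suc k)
    then show ?case using d[of "Suc k"] by (simp add: d_def N.zero)
  qed
  then show ?thesis
    by (simp add: f)
qed

end

lemma sum_Pow_insert:
  assumes "finite S" "i \<notin> S"
  shows "(\<Sum>U\<in>Pow (insert i S). f U) = (\<Sum>U\<in>Pow S. f U) + (\<Sum>U\<in>Pow S. f (insert i U))"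
proof -
  have "(\<Sum>U\<in>Pow (insert i S). f U) = (\<Sum>U\<in>Pow S. f U) + (\<Sum>U\<in>insert i ` Pow S. f U)"
    unfolding Pow_insert by (rule sum.union_disjoint) (use assms in auto)
  also have "(\<Sum>U\<in>insert i ` Pow S. f U) = (\<Sum>U\<in>Pow S. f (insert i U))"
    by (rule sum.reindex_cong[OF _ refl refl]) (use assms in \<open>auto intro!: inj_onI\<close>)
  finally show ?thesis .
qed

lemma length_applyN [simp]: "length (applyN f S xs) = length xs"
  by (simp add: applyN_def)

lemma nth_applyN [simp]:
  "k < length xs \<Longrightarrow> applyN f S xs ! k = (if k \<in> S then f (xs ! k) else xs ! k)"
  by (simp add: applyN_def)

lemma applyN_empty [simp]: "applyN f {} xs = xs"
  by (rule nth_equalityI) auto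

lemma applyN_all: "{..<length xs} \<subseteq> S \<Longrightarrow> applyN f S xs = map f xs"
  by (rule nth_equalityI) auto

lemma applyN_list_update:
  "i < length xs \<Longrightarrow> applyN f S (xs[i := v]) = (applyN f S xs)[i := if i \<in> S then f v else v]"
  by (rule nth_equalityI) (auto simp: nth_list_update)

lemma applyN_insert:
  "i \<notin> S \<Longrightarrow> i < length xs \<Longrightarrow> applyN f (insert i S) xs = applyN f S (xs[i := f (xs ! i)])"
  by (rule nth_equalityI) (auto simp: nth_list_update)

lemma applyN_swap:
  assumes "Suc i < length xs"
  shows "(applyN f S xs)[i := applyN f S xs ! Suc i, Suc i := applyN f S xs ! i]
       = applyN f (transpose i (Suc i) ` S) (xs[i := xs ! Suc i, Suc i := xs ! i])"
  using assms by (intro nth_equalityI) (auto simp: nth_list_update transpose_def)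

definition applyN_sum :: "('v list \<Rightarrow> 'v::ab_group_add) \<Rightarrow> ('v \<Rightarrow> 'v) \<Rightarrow> nat \<Rightarrow> 'v list \<Rightarrow> 'v" where
  "applyN_sum br N j xs = (\<Sum>S | S \<subseteq> {..<length xs} \<and> card S = j. br (applyN N S xs))"

context vector_space
begin

lemma n_multilinear_linear_slot:
  assumes "n_multilinear scale n B" "length xs = n" "i < n"
  shows "Vector_Spaces.linear scale scale (\<lambda>v. B (xs[i := v]))"
proof -
  have slot: "B (xs[i := c *s u + w]) = c *s B (xs[i := u]) + B (xs[i := w])" for c u w
    using assms unfolding n_multilinear_def by blast
  have "B (xs[i := 0]) = 0"
    using slot[of 1 0 0] by simp
  then show ?thesis
    unfolding linear_iff using vector_space_axioms slot[of 1] slot[of _ _ 0] by simp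
qed

lemma n_multilinear_add:
  "n_multilinear scale n B \<Longrightarrow> n_multilinear scale n B' \<Longrightarrow> n_multilinear scale n (\<lambda>xs. B xs + B' xs)"
  unfolding n_multilinear_def by (simp add: algebra_simps)

lemma n_multilinear_diff:
  "n_multilinear scale n B \<Longrightarrow> n_multilinear scale n B' \<Longrightarrow> n_multilinear scale n (\<lambda>xs. B xs - B' xs)"
  unfolding n_multilinear_def by (simp add: algebra_simps)

lemma n_multilinear_sum:
  "(\<And>a. a \<in> A \<Longrightarrow> n_multilinear scale n (B a)) \<Longrightarrow> n_multilinear scale n (\<lambda>xs. \<Sum>a\<in>A. B a xs)"
proof (induction A rule: infinite_finite_induct)
  case (insert a A)
  then show ?case
    using n_multilinear_add[of n "B a"] by simp
qed (simp_all add: n_multilinear_def)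

lemma n_multilinear_linear_comp:
  assumes "Vector_Spaces.linear scale scale F" "n_multilinear scale n B"
  shows "n_multilinear scale n (\<lambda>xs. F (B xs))"
proof -
  interpret F: linear scale scale F by (rule assms(1))
  show ?thesis
    using assms(2) unfolding n_multilinear_def by (simp add: F.add F.scale)
qed

lemma n_multilinear_applyN:
  assumes "Vector_Spaces.linear scale scale N" "n_multilinear scale n B"
  shows "n_multilinear scale n (\<lambda>xs. B (applyN N S xs))"
proof -
  interpret N: linear scale scale N by (rule assms(1))
  show ?thesis
    using assms(2) unfolding n_multilinear_def by (simp add: applyN_list_update N.add N.scale)
qed

lemma n_multilinear_nbr:
  assumes "Vector_Spaces.linear scale scale N" "n_multilinear scale n br"
  shows "n_multilinear scale n (nbr br N j)"
proof (induction j)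
  case 0
  then show ?case using assms(2) by simp
next
  case (Suc j)
  have "n_multilinear scale n (\<lambda>xs. \<Sum>S | S \<subseteq> {..<n} \<and> card S = Suc j. br (applyN N S xs))"
    by (intro n_multilinear_sum n_multilinear_applyN assms)
  moreover have "n_multilinear scale n (\<lambda>xs. N (nbr br N j xs))"
    by (rule n_multilinear_linear_comp[OF assms(1) Suc])
  ultimately have "n_multilinear scale n
      (\<lambda>xs. (\<Sum>S | S \<subseteq> {..<n} \<and> card S = Suc j. br (applyN N S xs)) - N (nbr br N j xs))"
    by (rule n_multilinear_diff)
  then show ?case
    unfolding n_multilinear_def by simp
qed

lemma n_multilinear_applyN_deformation:
  assumes N: "Vector_Spaces.linear scale scale N" and B: "n_multilinear scale n B"
    and "S \<subseteq> {..<n}" "length xs = n"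
  shows "B (applyN (\<lambda>x. x + l *s N x) S xs) = (\<Sum>U\<in>Pow S. l ^ card U *s B (applyN N U xs))"
  using finite_subset[OF assms(3) finite_lessThan] assms(3,4)
proof (induction S arbitrary: xs rule: finite_induct)
  case empty
  then show ?case by simp
next
  case (insert i S)
  let ?T = "\<lambda>x. x + l *s N x"
  have i: "i < length xs"
    using insert.prems by auto
  have "B (applyN ?T (insert i S) xs) = B ((applyN ?T S xs)[i := l *s N (xs ! i) + xs ! i])"
    using insert.hyps i by (simp add: applyN_insert applyN_list_update add.commute)
  also have "\<dots> = l *s B ((applyN ?T S xs)[i := N (xs ! i)]) + B ((applyN ?T S xs)[i := xs ! i])"
    using B insert.prems i unfolding n_multilinear_def by simp
  also have "\<dots> = l *s B (applyN ?T S (xs[i := N (xs ! i)])) + B (applyN ?T S xs)"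
    using insert.hyps i
    by (simp add: applyN_list_update) (metis length_applyN list_update_id nth_applyN)
  also have "\<dots> = (\<Sum>U\<in>Pow S. l ^ card U *s B (applyN N U xs))
      + (\<Sum>U\<in>Pow S. l ^ card (insert i U) *s B (applyN N (insert i U) xs))"
  proof -
    have "i \<notin> U" "finite U" if "U \<in> Pow S" for U
      using that insert.hyps finite_subset[of U S] by auto
    then show ?thesis
      using insert i by (simp add: applyN_insert scale_sum_right add.commute)
  qed
  also have "\<dots> = (\<Sum>U\<in>Pow (insert i S). l ^ card U *s B (applyN N U xs))"
    using insert.hyps by (simp add: sum_Pow_insert)
  finally show ?case .
qed

lemma n_multilinear_map_deformation:
  assumes N: "Vector_Spaces.linear scale scale N" and B: "n_multilinear scale n B"
    and xs: "length xs = n"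
  shows "B (map (\<lambda>x. x + l *s N x) xs) = (\<Sum>j\<le>n. l ^ j *s applyN_sum B N j xs)"
proof -
  have "B (map (\<lambda>x. x + l *s N x) xs) = B (applyN (\<lambda>x. x + l *s N x) {..<n} xs)"
    using xs by (simp add: applyN_all)
  also have "\<dots> = (\<Sum>U\<in>Pow {..<n}. l ^ card U *s B (applyN N U xs))"
    using n_multilinear_applyN_deformation[OF N B order_refl xs] .
  also have "\<dots> = (\<Sum>j\<le>n. \<Sum>U | U \<in> Pow {..<n} \<and> card U = j. l ^ card U *s B (applyN N U xs))"
    by (rule sum.group[symmetric]) (auto simp: card_mono[of "{..<n}", simplified])
  also have "\<dots> = (\<Sum>j\<le>n. l ^ j *s applyN_sum B N j xs)"
    unfolding applyN_sum_def scale_sum_right using xs by (intro sum.cong) auto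
  finally show ?thesis .
qed

end

locale hom_lie_color =
  fixes scale :: "'k::field_char_0 \<Rightarrow> 'v::ab_group_add \<Rightarrow> 'v" (infixr \<open>*s\<close> 75)
    and G :: "'g::ab_group_add \<Rightarrow> 'v set"
    and n :: nat
    and br :: "'v list \<Rightarrow> 'v"
    and eps :: "'g \<Rightarrow> 'g \<Rightarrow> 'k"
    and alpha :: "'v \<Rightarrow> 'v"
  assumes hom_lie_color: "n_hom_lie_color scale G n br eps alpha"

sublocale hom_lie_color \<subseteq> vector_space_char_0 scale
  using hom_lie_color vector_space_if_is_vector_space
  unfolding n_hom_lie_color_def graded_space_def vector_space_char_0_def by blast

context hom_lie_color
begin

lemma subspace_G: "subspace (G a)"
  using hom_lie_color is_subspace_iff_subspace
  unfolding n_hom_lie_color_def graded_space_def by blast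

lemma n_multilinear_br: "n_multilinear scale n br"
  using hom_lie_color unfolding n_hom_lie_color_def by blast

lemma bracket_degree_zero_br: "bracket_degree_zero G n br"
  using hom_lie_color unfolding n_hom_lie_color_def by blast

sublocale alpha: linear scale scale alpha
  using hom_lie_color k_linear_iff_linear unfolding n_hom_lie_color_def by blast

lemma br_swap:
  "length xs = n \<Longrightarrow> homog G xs as \<Longrightarrow> Suc i < n \<Longrightarrow>
    br xs = - (eps (as ! i) (as ! Suc i) *s br (xs[i := xs ! Suc i, Suc i := xs ! i]))"
  using hom_lie_color unfolding n_hom_lie_color_def by blast

lemma br_jacobi:
  "length xs = n - 1 \<Longrightarrow> homog G xs as \<Longrightarrow> length ys = n \<Longrightarrow> homog G ys bs \<Longrightarrow>
    br (map alpha xs @ [br ys]) =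
      (\<Sum>i<n. eps (sum_list as) (sum_list (take i bs)) *s
         br (map alpha (take i ys) @ [br (xs @ [ys ! i])] @ map alpha (drop (Suc i) ys)))"
  using hom_lie_color unfolding n_hom_lie_color_def by blast

end

locale hom_lie_color_operator = hom_lie_color scale G n br eps alpha
  for scale :: "'k::field_char_0 \<Rightarrow> 'v::ab_group_add \<Rightarrow> 'v" (infixr \<open>*s\<close> 75)
    and G :: "'g::ab_group_add \<Rightarrow> 'v set" and n br eps alpha +
  fixes N :: "'v \<Rightarrow> 'v"
  assumes k_linear_N: "k_linear scale N"
    and degree_zero_N: "degree_zero_map G N"
begin

sublocale N: linear scale scale N
  using k_linear_N k_linear_iff_linear by blast

abbreviation lbr :: "'k \<Rightarrow> 'v list \<Rightarrow> 'v" where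
  "lbr l \<equiv> lambda_bracket scale n br N l"

lemma N_mem_G: "x \<in> G a \<Longrightarrow> N x \<in> G a"
  using degree_zero_N unfolding degree_zero_map_def by blast

lemma homog_applyN: "homog G xs as \<Longrightarrow> homog G (applyN N S xs) as"
  unfolding homog_def by (auto simp: N_mem_G)

lemma n_multilinear_lbr: "n_multilinear scale n (lbr l)"
  unfolding lambda_bracket_def
  by (intro n_multilinear_add n_multilinear_sum n_multilinear_linear_comp[OF linear_scale_self]
      n_multilinear_br n_multilinear_nbr N.linear_axioms)

lemma bracket_degree_zero_nbr: "bracket_degree_zero G n (nbr br N j)"
proof (induction j)
  case 0
  then show ?case using bracket_degree_zero_br by simp
next
  case (Suc j)
  show ?case
    unfolding bracket_degree_zero_def
  proof (intro allI impI)
    fix xs as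
    assume "length xs = n \<and> length as = n \<and> (\<forall>i<n. xs ! i \<in> G (as ! i))"
    then have "br (applyN N S xs) \<in> G (sum_list as)" "nbr br N j xs \<in> G (sum_list as)" for S
      using bracket_degree_zero_br Suc unfolding bracket_degree_zero_def by (auto simp: N_mem_G)
    then show "nbr br N (Suc j) xs \<in> G (sum_list as)"
      by (simp add: subspace_diff subspace_sum subspace_G N_mem_G)
  qed
qed

lemma bracket_degree_zero_lbr: "bracket_degree_zero G n (lbr l)"
  using bracket_degree_zero_nbr[of 0] bracket_degree_zero_nbr
  unfolding bracket_degree_zero_def lambda_bracket_def
  by (auto intro!: subspace_add subspace_sum subspace_scale subspace_G)

lemma nbr_swap:
  assumes "length xs = n" "homog G xs as" "Suc i < n"
  shows "nbr br N j xs
    = - (eps (as ! i) (as ! Suc i) *s nbr br N j (xs[i := xs ! Suc i, Suc i := xs ! i]))"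
proof (induction j)
  case 0
  then show ?case using br_swap assms by simp
next
  case (Suc j)
  let ?e = "eps (as ! i) (as ! Suc i)"
  let ?ys = "xs[i := xs ! Suc i, Suc i := xs ! i]"
  let ?\<sigma> = "transpose i (Suc i)"
  define A where "A = {S. S \<subseteq> {..<n} \<and> card S = Suc j}"
  have each: "br (applyN N S xs) = - (?e *s br (applyN N (?\<sigma> ` S) ?ys))" for S
    using br_swap[OF _ homog_applyN[OF assms(2)]] assms applyN_swap[of i xs N S] by simp
  have reindex: "(\<Sum>S\<in>A. br (applyN N (?\<sigma> ` S) ?ys)) = (\<Sum>S\<in>A. br (applyN N S ?ys))"
  proof -
    have "?\<sigma> ` S \<in> A" if "S \<in> A" for S
    proof -
      have "?\<sigma> ` S \<subseteq> {..<n}"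
        using that assms(3) by (auto simp: A_def transpose_def)
      then show ?thesis
        using that by (simp add: A_def card_image)
    qed
    then show ?thesis
      by (intro sum.reindex_bij_witness[of _ "image ?\<sigma>" "image ?\<sigma>"]) (auto simp: image_comp)
  qed
  have "nbr br N (Suc j) xs = (\<Sum>S\<in>A. br (applyN N S xs)) - N (nbr br N j xs)"
    using assms(1) by (simp add: A_def)
  also have "\<dots> = - (?e *s ((\<Sum>S\<in>A. br (applyN N (?\<sigma> ` S) ?ys)) - N (nbr br N j ?ys)))"
    by (simp add: each Suc sum_negf scale_sum_right N.neg N.scale scale_right_diff_distrib)
  also have "\<dots> = - (?e *s nbr br N (Suc j) ?ys)"
    using assms(1) by (simp only: reindex) (simp add: A_def)
  finally show ?case .
qed

lemma lbr_swap:
  assumes "length xs = n" "homog G xs as" "Suc i < n"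
  shows "lbr l xs = - (eps (as ! i) (as ! Suc i) *s lbr l (xs[i := xs ! Suc i, Suc i := xs ! i]))"
proof -
  note swap = nbr_swap[OF assms]
  show ?thesis
    unfolding lambda_bracket_def
    using swap[of 0] by (simp add: swap sum_negf scale_sum_right scale_right_distrib mult.commute)
qed

lemma polynomial_fun_lbr: "polynomial_fun (\<lambda>l. lbr l xs)"
  unfolding lambda_bracket_def
  by (intro polynomial_fun_add polynomial_fun_const polynomial_fun_sum polynomial_fun_power_scale)

lemma polynomial_fun_lbr_slot:
  assumes "length us + Suc (length ws) = n" "polynomial_fun g"
  shows "polynomial_fun (\<lambda>l. lbr l (us @ g l # ws))"
proof -
  have "polynomial_fun (\<lambda>l. nbr br N j (us @ g l # ws))" for j
  proof -
    have "Vector_Spaces.linear scale scale (\<lambda>v. nbr br N j ((us @ 0 # ws)[length us := v]))"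
      using assms(1) n_multilinear_nbr[OF N.linear_axioms n_multilinear_br]
      by (intro n_multilinear_linear_slot) auto
    from polynomial_fun_linear[OF this assms(2)] show ?thesis
      by (simp add: list_update_length)
  qed
  from this this[of 0] show ?thesis
    unfolding lambda_bracket_def
    by (intro polynomial_fun_add polynomial_fun_sum polynomial_fun_power_scale) simp_all
qed

lemma polynomial_fun_lbr_nested:
  "length us + Suc (length ws) = n \<Longrightarrow> polynomial_fun (\<lambda>l. lbr l (us @ lbr l zs # ws))"
  by (rule polynomial_fun_lbr_slot[OF _ polynomial_fun_lbr])

definition T :: "'k \<Rightarrow> 'v \<Rightarrow> 'v" where
  "T l x = x + l *s N x"

lemma linear_T: "Vector_Spaces.linear scale scale (T l)"
  unfolding linear_iff T_def using vector_space_axioms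
  by (simp add: N.add N.scale scale_right_distrib scale_left_commute)

lemma homog_map_T: "homog G xs as \<Longrightarrow> homog G (map (T l) xs) as"
  unfolding homog_def T_def by (simp add: subspace_add subspace_scale subspace_G N_mem_G)

lemma polynomial_fun_eq_if_T_eq:
  assumes "polynomial_fun f" "polynomial_fun g" "\<And>l. T l (f l) = T l (g l)"
  shows "f l = g l"
proof -
  have "f l - g l + l *s N (f l - g l) = 0" for l
    using assms(3)[of l] by (simp add: T_def N.diff scale_right_diff_distrib algebra_simps)
  with polynomial_fun_diff[OF assms(1,2)] have "f l - g l = 0"
    by (rule polynomial_fun_eq_0_if_deformation_eq_0[OF N.linear_axioms])
  then show ?thesis
    by simp
qed

end

locale nijenhuis_hom_lie_color = hom_lie_color_operator scale G n br eps alpha N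
  for scale :: "'k::field_char_0 \<Rightarrow> 'v::ab_group_add \<Rightarrow> 'v" (infixr \<open>*s\<close> 75)
    and G :: "'g::ab_group_add \<Rightarrow> 'v set" and n br eps alpha N +
  assumes n_pos: "0 < n"
    and nijenhuis: "nijenhuis n br alpha N"
begin

lemma T_alpha: "T l (alpha x) = alpha (T l x)"
  using nijenhuis unfolding nijenhuis_def T_def
  by (simp add: alpha.add alpha.scale fun_eq_iff)

lemma applyN_sum_eq_nbr:
  assumes xs: "length xs = n" and "j \<le> n"
  shows "applyN_sum br N j xs
    = (if j < n then nbr br N j xs else 0) + (if j = 0 then 0 else N (nbr br N (j - 1) xs))"
proof -
  consider "j = 0" | i where "j = Suc i" "j < n" | "j = n" "0 < j"
    using assms(2) n_pos by (cases j) (auto simp: le_less)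
  then show ?thesis
  proof cases
    case 1
    have "{S. S \<subseteq> {..<n} \<and> card S = 0} = {{}}"
      by (auto dest: finite_subset[OF _ finite_lessThan])
    then show ?thesis
      using 1 xs n_pos by (simp add: applyN_sum_def)
  next
    case 2
    then show ?thesis
      by (simp add: applyN_sum_def)
  next
    case 3
    have "{S. S \<subseteq> {..<n} \<and> card S = n} = {{..<n}}"
      using card_subset_eq[of "{..<n}"] by auto
    then show ?thesis
      using 3 xs nijenhuis unfolding nijenhuis_def by (simp add: applyN_sum_def applyN_all)
  qed
qed

lemma lbr_eq_sum_nbr: "lbr l xs = (\<Sum>j<n. l ^ j *s nbr br N j xs)"
proof -
  have "{..<n} = insert 0 {1..n - 1}"
    using n_pos by auto
  then show ?thesis
    by (simp add: lambda_bracket_def)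
qed

lemma T_lbr:
  assumes "length xs = n"
  shows "T l (lbr l xs) = br (map (T l) xs)"
proof -
  have "T l (lbr l xs)
      = (\<Sum>j<n. l ^ j *s nbr br N j xs)
        + (\<Sum>j<Suc n. l ^ j *s (if j = 0 then 0 else N (nbr br N (j - 1) xs)))"
    by (simp only: T_def lbr_eq_sum_nbr N.sum N.scale scale_sum_power_scale)
  also have "\<dots> = (\<Sum>j<Suc n. l ^ j *s
      ((if j < n then nbr br N j xs else 0) + (if j = 0 then 0 else N (nbr br N (j - 1) xs))))"
    by (simp only: scale_right_distrib sum.distrib sum_power_scale_pad[OF le_SucI[OF order_refl]])
  also have "\<dots> = (\<Sum>j\<le>n. l ^ j *s applyN_sum br N j xs)"
    unfolding lessThan_Suc_atMost using assms by (intro sum.cong refl) (simp add: applyN_sum_eq_nbr)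
  also have "\<dots> = br (map (T l) xs)"
    using n_multilinear_map_deformation[OF N.linear_axioms n_multilinear_br assms]
    by (simp add: T_def[abs_def])
  finally show ?thesis .
qed

lemma T_lbr_nested:
  assumes "length us + Suc (length ws) = n" "length zs = n"
  shows "T l (lbr l (us @ lbr l zs # ws)) = br (map (T l) us @ br (map (T l) zs) # map (T l) ws)"
  using assms by (simp add: T_lbr)

lemma T_lbr_jacobi:
  assumes xs: "length xs = n - 1" "homog G xs as" and ys: "length ys = n" "homog G ys bs"
  shows "T l (lbr l (map alpha xs @ [lbr l ys])) =
    T l (\<Sum>i<n. eps (sum_list as) (sum_list (take i bs)) *s
       lbr l (map alpha (take i ys) @ [lbr l (xs @ [ys ! i])] @ map alpha (drop (Suc i) ys)))"
proof -
  interpret T: linear scale scale "T l"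
    by (rule linear_T)
  have T_comp_alpha: "T l \<circ> alpha = alpha \<circ> T l"
    by (simp add: fun_eq_iff T_alpha)
  have "T l (lbr l (map alpha xs @ [lbr l ys]))
      = br (map alpha (map (T l) xs) @ [br (map (T l) ys)])"
    using T_lbr_nested[of "map alpha xs" "[]" ys] xs ys n_pos by (simp add: T_comp_alpha)
  also have "\<dots> = (\<Sum>i<n. eps (sum_list as) (sum_list (take i bs)) *s
      br (map alpha (take i (map (T l) ys)) @ [br (map (T l) xs @ [map (T l) ys ! i])]
        @ map alpha (drop (Suc i) (map (T l) ys))))"
    using xs ys by (intro br_jacobi homog_map_T) simp_all
  also have "\<dots> = T l (\<Sum>i<n. eps (sum_list as) (sum_list (take i bs)) *s
      lbr l (map alpha (take i ys) @ [lbr l (xs @ [ys ! i])] @ map alpha (drop (Suc i) ys)))"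
    using xs ys n_pos
      T_lbr_nested[of "map alpha (take i ys)" "map alpha (drop (Suc i) ys)" "xs @ [ys ! i]" for i]
    by (simp add: T.sum T.scale T_comp_alpha take_map drop_map)
  finally show ?thesis .
qed

lemma lbr_jacobi:
  assumes xs: "length xs = n - 1" "homog G xs as" and ys: "length ys = n" "homog G ys bs"
  shows "lbr l (map alpha xs @ [lbr l ys]) =
    (\<Sum>i<n. eps (sum_list as) (sum_list (take i bs)) *s
       lbr l (map alpha (take i ys) @ [lbr l (xs @ [ys ! i])] @ map alpha (drop (Suc i) ys)))"
proof (rule polynomial_fun_eq_if_T_eq[OF _ _ T_lbr_jacobi[OF assms]])
  show "polynomial_fun (\<lambda>l. lbr l (map alpha xs @ [lbr l ys]))"
    using polynomial_fun_lbr_nested[of "map alpha xs" "[]"] xs n_pos by simp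
  show "polynomial_fun (\<lambda>l. \<Sum>i<n. eps (sum_list as) (sum_list (take i bs)) *s
      lbr l (map alpha (take i ys) @ [lbr l (xs @ [ys ! i])] @ map alpha (drop (Suc i) ys)))"
    using ys polynomial_fun_lbr_nested[of "map alpha (take i ys)" "map alpha (drop (Suc i) ys)" for i]
    by (intro polynomial_fun_sum polynomial_fun_linear[OF linear_scale_self]) simp
qed

lemma n_hom_lie_color_lbr: "n_hom_lie_color scale G n (lbr l) eps alpha"
  using hom_lie_color n_multilinear_lbr bracket_degree_zero_lbr lbr_swap lbr_jacobi
  unfolding n_hom_lie_color_def by blast

end

theorem theorem6p3:
  fixes scale :: "'k::field_char_0 \<Rightarrow> 'v::ab_group_add \<Rightarrow> 'v"
    and G :: "'g::ab_group_add \<Rightarrow> 'v set"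
    and n :: nat
    and br :: "'v list \<Rightarrow> 'v"
    and eps :: "'g \<Rightarrow> 'g \<Rightarrow> 'k"
    and alpha N :: "'v \<Rightarrow> 'v"
  assumes "n \<ge> 2"
    and "n_hom_lie_color scale G n br eps alpha"
    and "k_linear scale N" and "degree_zero_map G N"
    and "nijenhuis n br alpha N"
  shows "\<forall>lam :: 'k.
     n_hom_lie_color scale G n (lambda_bracket scale n br N lam) eps alpha \<and>
     (\<forall>x. alpha x + scale lam (N (alpha x)) = alpha (x + scale lam (N x))) \<and>
     (\<forall>xs. length xs = n \<longrightarrow>
        lambda_bracket scale n br N lam xs + scale lam (N (lambda_bracket scale n br N lam xs))
          = br (map (\<lambda>x. x + scale lam (N x)) xs))"
proof -
  interpret nijenhuis_hom_lie_color scale G n br eps alpha N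
    using assms by unfold_locales auto
  show ?thesis
    using n_hom_lie_color_lbr T_alpha T_lbr unfolding T_def by blast
qed

end
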